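(* Let $A,B$ be symmetric $m\times m$ real matrices, let $c_1\ge c_2\ge\dots\ge c_m$ be real constants, and let $\sigma$ be a permutation of $\{1,\dots,m\}$. Then $$\sum_{j=1}^m c_{\sigma(j)}\lambda_j(A+B)\le\sum_{j=1}^m c_{\sigma(j)}\lambda_j(A)+\sum_{j=1}^m c_j\lambda_j(B).$$
   Context: For a symmetric $m\times m$ matrix $M$, $\lambda_1(M)\ge\lambda_2(M)\ge\dots\ge\lambda_m(M)$ denote its eigenvalues in decreasing order. *)

theory Defs
  imports "Jordan_Normal_Form.Matrix" "Jordan_Normal_Form.Char_Poly"
begin

text \<open>Indices are 0-based:
  eig A ! (j-1) is lambda_j(A).\<close>
definition eigs_desc :: "real mat \<Rightarrow> real list" where
  "eigs_desc A = (THE xs. sorted_wrt (\<ge>) xs \<and> char_poly A = (\<Prod>a\<leftarrow>xs. [:- a, 1:]))"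

definition eig :: "real mat \<Rightarrow> nat \<Rightarrow> real" where
  "eig A j = eigs_desc A ! j"

end

theory Submission
  imports Defs "Jordan_Normal_Form.Schur_Decomposition"
begin

text \<open>A real symmetric matrix is \<open>U D U\<^sup>T\<close> with \<open>U\<close> orthonormal and \<open>D\<close> the diagonal
  matrix of its eigenvalues in decreasing order. Comparing quadratic forms on a nonzero vector
  orthogonal to the eigenvectors of one matrix with index \<open>< j\<close> and to those of another with
  index \<open>> j\<close> gives Weyl's monotonicity: adding a positive semidefinite matrix does not
  decrease any \<open>\<lambda>\<^sub>j\<close>. Writing \<open>B = V diag(\<beta>) V\<^sup>T\<close>, the matrix \<open>V diag(max \<beta>\<^sub>t \<beta>\<^sub>k) V\<^sup>T\<close>
  dominates both \<open>B\<close> and \<open>\<beta>\<^sub>k I\<close>; comparing traces yields Lidskii's inequality: over any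
  set \<open>S\<close> of \<open>k + 1\<close> indices, \<open>\<lambda>\<^sub>t(A + B) - \<lambda>\<^sub>t(A)\<close> sums to at most the sum of the \<open>k + 1\<close>
  largest eigenvalues of \<open>B\<close>. With \<open>S\<close> the image of \<open>{0..k}\<close> under \<open>\<sigma>\<^sup>-\<^sup>1\<close>, this says that
  the partial sums of \<open>\<lambda>\<^sub>\<sigma>\<^sub>\<^sup>-\<^sub>\<^sup>1\<^sub>i(A + B) - \<lambda>\<^sub>\<sigma>\<^sub>\<^sup>-\<^sub>\<^sup>1\<^sub>i(A)\<close> are bounded by those of \<open>\<lambda>\<^sub>i(B)\<close>, with equal
  totals by the trace; Abel summation against the non-increasing weights \<open>c\<close> concludes.\<close>

section \<open>Sorted eigenvalue lists\<close>

lemma prod_linear_factors_eq_imp_mset_eq: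
  fixes xs ys :: "'a::idom list"
  assumes "(\<Prod>a\<leftarrow>xs. [:- a, 1:]) = (\<Prod>a\<leftarrow>ys. [:- a, 1:])"
  shows "mset xs = mset ys"
  using assms
proof (induction xs arbitrary: ys)
  case Nil
  have "degree (\<Prod>a\<leftarrow>ys. [:- a, 1:]) = length ys" by (rule degree_linear_factors)
  with Nil show ?case by simp
next
  case (Cons x xs)
  have "poly (\<Prod>a\<leftarrow>ys. [:- a, 1:]) x = 0" using Cons.prems[symmetric] by (simp add: poly_prod_list)
  then have x: "x \<in> set ys" by (auto simp: poly_prod_list prod_list_zero_iff)
  then have "(\<Prod>a\<leftarrow>ys. [:- a, 1:]) = [:-x,1:] * (\<Prod>a\<leftarrow>remove1 x ys. [:- a, 1:])"
    by (rule prod_list_map_remove1)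
  with Cons.prems have "[:-x,1:] * (\<Prod>a\<leftarrow>xs. [:- a, 1:])
      = [:-x,1:] * (\<Prod>a\<leftarrow>remove1 x ys. [:- a, 1:])"
    by simp
  then have "(\<Prod>a\<leftarrow>xs. [:- a, 1:]) = (\<Prod>a\<leftarrow>remove1 x ys. [:- a, 1:])"
    by (subst (asm) mult_left_cancel) auto
  from Cons.IH[OF this] show ?case using x by (simp add: mset_remove1 insert_DiffM)
qed

lemma sorted_wrt_ge_mset_eq_imp_eq:
  fixes xs ys :: "'a::linorder list"
  assumes "sorted_wrt (\<ge>) xs" "sorted_wrt (\<ge>) ys" "mset xs = mset ys"
  shows "xs = ys"
proof -
  have "sorted (rev xs)" "sorted (rev ys)" using assms by (simp_all add: sorted_wrt_rev)
  then have "sort (rev ys) = rev xs" "sort (rev ys) = rev ys"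
    using assms(3) by (metis mset_rev properties_for_sort)+
  then show ?thesis by simp
qed

lemma eigs_desc_eqI:
  assumes "sorted_wrt (\<ge>) xs" "char_poly A = (\<Prod>a\<leftarrow>xs. [:- a, 1:])"
  shows "eigs_desc A = xs"
  unfolding eigs_desc_def
proof (rule the_equality)
  fix ys assume "sorted_wrt (\<ge>) ys \<and> char_poly A = (\<Prod>a\<leftarrow>ys. [:- a, 1:])"
  then have "sorted_wrt (\<ge>) ys" "mset ys = mset xs"
    using assms prod_linear_factors_eq_imp_mset_eq[of ys xs] by auto
  then show "ys = xs" using assms(1) sorted_wrt_ge_mset_eq_imp_eq by blast
qed (use assms in auto)

lemma eigs_desc_char_poly:
  assumes "char_poly A = (\<Prod>a\<leftarrow>rs. [:- a, 1:])"
  shows "sorted_wrt (\<ge>) (eigs_desc A)" "char_poly A = (\<Prod>a\<leftarrow>eigs_desc A. [:- a, 1:])"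
proof -
  have "(\<Prod>a\<leftarrow>rev (sort rs). [:- a, 1:]) = (\<Prod>a\<leftarrow>rs. [:- a, 1:])"
    by (simp only: prod_mset_prod_list[symmetric] mset_map mset_rev mset_sort)
  then have "eigs_desc A = rev (sort rs)"
    using assms by (intro eigs_desc_eqI) (simp_all add: sorted_wrt_rev)
  then show "sorted_wrt (\<ge>) (eigs_desc A)" "char_poly A = (\<Prod>a\<leftarrow>eigs_desc A. [:- a, 1:])"
    using assms \<open>(\<Prod>a\<leftarrow>rev (sort rs). [:- a, 1:]) = _\<close> by (simp_all add: sorted_wrt_rev)
qed

section \<open>Orthonormal diagonal forms\<close>

definition orthonormal_mat :: "nat \<Rightarrow> real mat \<Rightarrow> bool" where
  "orthonormal_mat n U \<longleftrightarrow> U \<in> carrier_mat n n \<and> transpose_mat U * U = 1\<^sub>m n"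

definition spectral_mat :: "nat \<Rightarrow> real mat \<Rightarrow> (nat \<Rightarrow> real) \<Rightarrow> real mat" where
  "spectral_mat n U f = U * mat_diag n f * transpose_mat U"

definition mat_trace :: "'a::comm_monoid_add mat \<Rightarrow> 'a" where
  "mat_trace M = (\<Sum>i<dim_row M. M $$ (i,i))"

lemma orthonormal_mat_carrier: "orthonormal_mat n U \<Longrightarrow> U \<in> carrier_mat n n"
  by (simp add: orthonormal_mat_def)

lemma orthonormal_mat_right_inverse:
  "orthonormal_mat n U \<Longrightarrow> U * transpose_mat U = 1\<^sub>m n"
  using mat_mult_left_right_inverse[of "transpose_mat U" n U] by (auto simp: orthonormal_mat_def)

lemma orthonormal_mat_col_scalar_prod:
  assumes "orthonormal_mat n U" "k < n" "l < n"
  shows "col U k \<bullet> col U l = (if k = l then 1 else 0)"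
proof -
  have "(transpose_mat U * U) $$ (k,l) = col U k \<bullet> col U l"
    using assms orthonormal_mat_carrier[OF assms(1)] by simp
  then show ?thesis using assms by (simp add: orthonormal_mat_def)
qed

lemma orthonormal_matI:
  assumes U: "U \<in> carrier_mat n n"
    and "\<And>k l. k < n \<Longrightarrow> l < n \<Longrightarrow> col U k \<bullet> col U l = (if k = l then 1 else 0)"
  shows "orthonormal_mat n U"
  unfolding orthonormal_mat_def by (intro conjI U eq_matI) (use assms in auto)

lemma orthonormal_mat_mult:
  assumes "orthonormal_mat n W" "orthonormal_mat n V"
  shows "orthonormal_mat n (W * V)"
proof -
  have W: "W \<in> carrier_mat n n" and V: "V \<in> carrier_mat n n"
    using assms by (simp_all add: orthonormal_mat_carrier)
  have "transpose_mat (W * V) * (W * V) = transpose_mat V * (transpose_mat W * W) * V"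
    using W V by (simp add: transpose_mult[OF W V] assoc_mult_mat[of _ n n _ n _ n])
  also have "\<dots> = 1\<^sub>m n" using assms V by (simp add: orthonormal_mat_def)
  finally show ?thesis using W V by (simp add: orthonormal_mat_def)
qed

lemma orthonormal_mat_conj_cancel:
  assumes W: "orthonormal_mat n W" and A: "A \<in> carrier_mat n n"
  shows "W * (transpose_mat W * A * W) * transpose_mat W = A"
proof -
  have Wc: "W \<in> carrier_mat n n" using W by (rule orthonormal_mat_carrier)
  have "W * (transpose_mat W * A * W) * transpose_mat W
      = (W * transpose_mat W) * A * (W * transpose_mat W)"
    using A Wc by (simp add: assoc_mult_mat[of _ n n _ n _ n])
  then show ?thesis using A orthonormal_mat_right_inverse[OF W] by simp
qed

lemma char_poly_orthonormal_conj:
  assumes W: "orthonormal_mat n W" and A: "A \<in> carrier_mat n n"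
  shows "char_poly (transpose_mat W * A * W) = char_poly A"
proof (rule char_poly_similar)
  show "similar_mat (transpose_mat W * A * W) A"
    unfolding similar_mat_def similar_mat_wit_def
    using A W orthonormal_mat_carrier[OF W] orthonormal_mat_right_inverse[OF W]
    by (intro exI[of _ "transpose_mat W"] exI[of _ W]) (auto simp: orthonormal_mat_def)
qed

lemma mat_diag_dims[simp]: "dim_row (mat_diag n f) = n" "dim_col (mat_diag n f) = n"
  by (simp_all add: mat_diag_def)

lemma spectral_mat_dim[simp]:
  "dim_row (spectral_mat n U f) = dim_row U" "dim_col (spectral_mat n U f) = dim_row U"
  by (simp_all add: spectral_mat_def)

lemma spectral_mat_carrier[simp]:
  "U \<in> carrier_mat n n \<Longrightarrow> spectral_mat n U f \<in> carrier_mat n n"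
  by (intro carrier_matI) auto

lemma spectral_mat_index:
  assumes U: "U \<in> carrier_mat n n" and ij: "i < n" "j < n"
  shows "spectral_mat n U f $$ (i,j) = (\<Sum>k<n. U $$ (i,k) * f k * U $$ (j,k))"
proof -
  have "U * mat_diag n f = mat n n (\<lambda>(i,k). U $$ (i,k) * f k)"
    by (rule mat_diag_mult_right[OF U])
  then show ?thesis
    unfolding spectral_mat_def using U ij
    by (simp add: scalar_prod_def lessThan_atLeast0)
qed

lemma spectral_mat_symmetric:
  "U \<in> carrier_mat n n \<Longrightarrow> transpose_mat (spectral_mat n U f) = spectral_mat n U f"
  by (rule eq_matI) (auto simp: spectral_mat_index mult.commute mult.left_commute)

lemma spectral_mat_add:
  assumes U: "U \<in> carrier_mat n n"
  shows "spectral_mat n U f + spectral_mat n U g = spectral_mat n U (\<lambda>k. f k + g k)"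
proof (rule eq_matI)
  fix i j assume "i < dim_row (spectral_mat n U (\<lambda>k. f k + g k))"
    "j < dim_col (spectral_mat n U (\<lambda>k. f k + g k))"
  then have ij: "i < n" "j < n" using U by auto
  show "(spectral_mat n U f + spectral_mat n U g) $$ (i,j) = spectral_mat n U (\<lambda>k. f k + g k) $$ (i,j)"
    using U ij by (simp add: spectral_mat_index distrib_left distrib_right sum.distrib)
qed (use U in auto)

lemma spectral_mat_mult_left:
  assumes W: "W \<in> carrier_mat n n" and U: "U \<in> carrier_mat n n"
  shows "spectral_mat n (W * U) f = W * spectral_mat n U f * transpose_mat W"
  unfolding spectral_mat_def using W U
  by (simp add: transpose_mult[OF W U] assoc_mult_mat[of _ n n _ n _ n] mult_carrier_mat[of _ n n _ n])

lemma spectral_mat_const: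
  assumes "orthonormal_mat n U"
  shows "spectral_mat n U (\<lambda>k. c) = c \<cdot>\<^sub>m 1\<^sub>m n"
proof -
  have U: "U \<in> carrier_mat n n" using assms by (rule orthonormal_mat_carrier)
  have "mat_diag n (\<lambda>k. c) = c \<cdot>\<^sub>m 1\<^sub>m n" by (rule eq_matI) (auto simp: mat_diag_def)
  moreover have "U * (c \<cdot>\<^sub>m 1\<^sub>m n) = c \<cdot>\<^sub>m U"
    using U by (simp add: mult_smult_distrib[of U n n "1\<^sub>m n" n])
  ultimately have "spectral_mat n U (\<lambda>k. c) = c \<cdot>\<^sub>m (U * transpose_mat U)"
    unfolding spectral_mat_def using U by (simp add: mult_smult_assoc_mat[of U n n _ n])
  then show ?thesis using orthonormal_mat_right_inverse[OF assms] by simp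
qed

lemma mat_trace_add:
  "A \<in> carrier_mat n n \<Longrightarrow> B \<in> carrier_mat n n \<Longrightarrow> mat_trace (A + B) = mat_trace A + mat_trace B"
  by (simp add: mat_trace_def sum.distrib)

lemma mat_trace_spectral_mat:
  assumes "orthonormal_mat n U"
  shows "mat_trace (spectral_mat n U f) = (\<Sum>k<n. f k)"
proof -
  have U: "U \<in> carrier_mat n n" using assms by (rule orthonormal_mat_carrier)
  have "mat_trace (spectral_mat n U f) = (\<Sum>i<n. \<Sum>k<n. f k * (U $$ (i,k) * U $$ (i,k)))"
    unfolding mat_trace_def using U by (auto simp: spectral_mat_index mult_ac intro!: sum.cong)
  also have "\<dots> = (\<Sum>k<n. f k * (col U k \<bullet> col U k))"
    using U by (subst sum.swap) (simp add: scalar_prod_def lessThan_atLeast0 sum_distrib_left)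
  also have "\<dots> = (\<Sum>k<n. f k)" using orthonormal_mat_col_scalar_prod[OF assms] by simp
  finally show ?thesis .
qed

lemma mat_diag_mult_vec_index:
  "v \<in> carrier_vec n \<Longrightarrow> k < n \<Longrightarrow> (mat_diag n f *\<^sub>v v) $ k = f k * v $ k"
  by (simp add: mat_diag_def scalar_prod_def if_distrib[of "\<lambda>x. x * _"] cong: if_cong)

lemma quadratic_form_spectral_mat:
  assumes U: "U \<in> carrier_mat n n" and z: "z \<in> carrier_vec n"
  shows "z \<bullet> (spectral_mat n U f *\<^sub>v z) = (\<Sum>k<n. f k * (col U k \<bullet> z)^2)"
proof -
  define y where "y = transpose_mat U *\<^sub>v z"
  have y: "y \<in> carrier_vec n" and y_index: "\<And>k. k < n \<Longrightarrow> y $ k = col U k \<bullet> z"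
    using U z by (auto simp: y_def)
  have "spectral_mat n U f *\<^sub>v z = U *\<^sub>v (mat_diag n f *\<^sub>v y)"
    unfolding spectral_mat_def y_def using U z
    by (simp add: assoc_mult_mat_vec[of _ n n _ n])
  then have "z \<bullet> (spectral_mat n U f *\<^sub>v z) = y \<bullet> (mat_diag n f *\<^sub>v y)"
    using transpose_vec_mult_scalar[OF U mult_mat_vec_carrier[OF mat_diag_dim y] z]
    by (simp add: y_def[symmetric])
  also have "\<dots> = (\<Sum>k<n. y $ k * (f k * y $ k))"
    unfolding scalar_prod_def lessThan_atLeast0 using y
    by (intro sum.cong) (simp_all add: mat_diag_mult_vec_index del: index_mult_mat_vec)
  also have "\<dots> = (\<Sum>k<n. f k * (col U k \<bullet> z)^2)"
    by (rule sum.cong) (auto simp: y_index power2_eq_square)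
  finally show ?thesis .
qed

lemma spectral_mat_one:
  assumes "orthonormal_mat n U"
  shows "spectral_mat n U (\<lambda>k. 1) = 1\<^sub>m n"
  using orthonormal_mat_right_inverse[OF assms] orthonormal_mat_carrier[OF assms]
  by (simp add: spectral_mat_def)

lemma sum_sq_col_scalar_prod:
  assumes "orthonormal_mat n U" and z: "z \<in> carrier_vec n"
  shows "(\<Sum>k<n. (col U k \<bullet> z)^2) = z \<bullet> z"
  using quadratic_form_spectral_mat[OF orthonormal_mat_carrier[OF assms(1)] z, of "\<lambda>k. 1"]
    spectral_mat_one[OF assms(1)] z by simp

lemma real_cscalar_prod: "(v :: real vec) \<bullet>c w = v \<bullet> w"
  by (simp add: scalar_prod_def)

lemma real_scalar_prod_self_pos:
  assumes "v \<in> carrier_vec n" "v \<noteq> 0\<^sub>v n"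
  shows "0 < (v :: real vec) \<bullet> v"
  using conjugate_square_greater_0_vec[OF assms(1)] assms(2) by (simp add: real_cscalar_prod)

lemma orthonormal_mat_of_corthogonal_cols:
  fixes ws :: "real vec list"
  assumes ws: "set ws \<subseteq> carrier_vec n" "corthogonal ws" "length ws = n"
  defines "W \<equiv> mat_of_cols n (map (\<lambda>w. (1 / sqrt (w \<bullet> w)) \<cdot>\<^sub>v w) ws)"
  shows "orthonormal_mat n W"
proof (rule orthonormal_matI)
  show "W \<in> carrier_mat n n"
    using mat_of_cols_carrier(1)[of n "map _ ws"] ws(3) by (simp add: W_def)
  fix k l assume k: "k < n" and l: "l < n"
  have ws_k: "ws ! k \<in> carrier_vec n" and ws_l: "ws ! l \<in> carrier_vec n" using ws k l by auto
  have "col W k \<bullet> col W l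
      = (1 / sqrt (ws ! k \<bullet> ws ! k)) * (1 / sqrt (ws ! l \<bullet> ws ! l)) * (ws ! k \<bullet> ws ! l)"
    using ws k l ws_k ws_l by (simp add: W_def col_mat_of_cols mult.assoc)
  moreover have "(ws ! k \<bullet> ws ! l = 0) = (k \<noteq> l)"
    using corthogonalD[OF ws(2)] ws(3) k l by (simp add: real_cscalar_prod)
  moreover have "0 \<le> ws ! k \<bullet> ws ! k"
    using conjugate_square_ge_0_vec[of "ws ! k"] by (simp add: real_cscalar_prod)
  ultimately show "col W k \<bullet> col W l = (if k = l then 1 else 0)"
    by (cases "k = l") auto
qed

lemma unit_vec_extends_to_orthonormal_mat:
  fixes u :: "real vec"
  assumes u: "u \<in> carrier_vec n" and uu: "u \<bullet> u = 1"
  shows "\<exists>W. orthonormal_mat n W \<and> col W 0 = u"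
proof -
  have u0: "u \<noteq> 0\<^sub>v n" using uu by auto
  have n: "n \<noteq> 0"
  proof
    assume "n = 0"
    then show False using u uu by (simp add: scalar_prod_def)
  qed
  interpret cof_vec_space n "TYPE(real)" .
  define b where "b = basis_completion u"
  from basis_completion[OF u u0, folded b_def]
  have b: "distinct b" "\<not> lin_dep (set b)" "set b \<subseteq> carrier_vec n" "hd b = u" "length b = n"
    by auto
  then obtain vs where bv: "b = u # vs" using n by (cases b) auto
  define ws where "ws = gram_schmidt n b"
  from gram_schmidt_result[OF b(3,1,2) refl, folded ws_def]
  have ws: "set ws \<subseteq> carrier_vec n" "corthogonal ws" "length ws = n" by (auto simp: b(5))
  from gram_schmidt_hd[OF u, of vs, folded bv] have "hd ws = u" unfolding ws_def .
  then have "ws ! 0 = u" using ws(3) n by (cases ws) auto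
  define W where "W = mat_of_cols n (map (\<lambda>w. (1 / sqrt (w \<bullet> w)) \<cdot>\<^sub>v w) ws)"
  have "col W 0 = u"
    using \<open>ws ! 0 = u\<close> ws n u uu by (simp add: W_def col_mat_of_cols)
  then show ?thesis using orthonormal_mat_of_corthogonal_cols[OF ws] unfolding W_def by blast
qed

lemma unit_eigenvector_exists:
  fixes A :: "real mat"
  assumes A: "A \<in> carrier_mat n n" and "eigenvalue A e"
  obtains u where "u \<in> carrier_vec n" "u \<bullet> u = 1" "A *\<^sub>v u = e \<cdot>\<^sub>v u"
proof -
  obtain v where "eigenvector A v e" using assms(2) unfolding eigenvalue_def by auto
  then have v: "v \<in> carrier_vec n" "v \<noteq> 0\<^sub>v n" and Av: "A *\<^sub>v v = e \<cdot>\<^sub>v v"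
    using A unfolding eigenvector_def by auto
  have pos: "0 < v \<bullet> v" by (rule real_scalar_prod_self_pos[OF v])
  define u where "u = (1 / sqrt (v \<bullet> v)) \<cdot>\<^sub>v v"
  have "u \<in> carrier_vec n" "u \<bullet> u = 1" using v pos by (simp_all add: u_def)
  moreover have "A *\<^sub>v u = e \<cdot>\<^sub>v u"
    unfolding u_def mult_mat_vec[OF A v(1)] Av by (simp add: smult_smult_assoc mult.commute)
  ultimately show ?thesis by (rule that)
qed

definition block_diag_mat :: "'a::zero mat \<Rightarrow> 'a mat \<Rightarrow> 'a mat" where
  "block_diag_mat A D =
     four_block_mat A (0\<^sub>m (dim_row A) (dim_col D)) (0\<^sub>m (dim_row D) (dim_col A)) D"

lemma block_diag_mat_carrier[simp]:
  "A \<in> carrier_mat n1 n1 \<Longrightarrow> D \<in> carrier_mat n2 n2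
    \<Longrightarrow> block_diag_mat A D \<in> carrier_mat (n1 + n2) (n1 + n2)"
  by (simp add: block_diag_mat_def)

lemma transpose_block_diag_mat:
  assumes "A \<in> carrier_mat n1 n1" "D \<in> carrier_mat n2 n2"
  shows "transpose_mat (block_diag_mat A D) = block_diag_mat (transpose_mat A) (transpose_mat D)"
  using transpose_four_block_mat[OF assms(1) zero_carrier_mat zero_carrier_mat assms(2)] assms
  by (simp add: block_diag_mat_def)

lemma block_diag_mat_mult:
  fixes A1 :: "'a::semiring_0 mat"
  assumes "A1 \<in> carrier_mat n1 n1" "A2 \<in> carrier_mat n1 n1"
    and "D1 \<in> carrier_mat n2 n2" "D2 \<in> carrier_mat n2 n2"
  shows "block_diag_mat A1 D1 * block_diag_mat A2 D2 = block_diag_mat (A1 * A2) (D1 * D2)"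
  using mult_four_block_mat[OF assms(1) zero_carrier_mat zero_carrier_mat assms(3)
      assms(2) zero_carrier_mat zero_carrier_mat assms(4)] assms
  by (simp add: block_diag_mat_def)

lemma orthonormal_block_diag_mat:
  assumes "orthonormal_mat n1 U" "orthonormal_mat n2 V"
  shows "orthonormal_mat (n1 + n2) (block_diag_mat U V)"
proof -
  have U: "U \<in> carrier_mat n1 n1" and V: "V \<in> carrier_mat n2 n2"
    using assms by (simp_all add: orthonormal_mat_carrier)
  have "transpose_mat (block_diag_mat U V) * block_diag_mat U V
      = block_diag_mat (transpose_mat U * U) (transpose_mat V * V)"
    using U V by (simp add: transpose_block_diag_mat block_diag_mat_mult[of _ n1 _ _ n2])
  also have "\<dots> = 1\<^sub>m (n1 + n2)" using assms by (simp add: orthonormal_mat_def block_diag_mat_def)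
  finally show ?thesis using U V by (simp add: orthonormal_mat_def)
qed

lemma mat_diag_add_dims:
  "mat_diag (n1 + n2) f = block_diag_mat (mat_diag n1 f) (mat_diag n2 (\<lambda>i. f (n1 + i)))"
  by (rule eq_matI) (auto simp: block_diag_mat_def mat_diag_def)

lemma spectral_mat_block_diag_mat:
  assumes U: "U \<in> carrier_mat n1 n1" and V: "V \<in> carrier_mat n2 n2"
  shows "spectral_mat (n1 + n2) (block_diag_mat U V) f
    = block_diag_mat (spectral_mat n1 U f) (spectral_mat n2 V (\<lambda>i. f (n1 + i)))"
  using assms unfolding spectral_mat_def mat_diag_add_dims
  by (simp add: transpose_block_diag_mat block_diag_mat_mult[of _ n1 _ _ n2])

lemma char_poly_block_diag_mat_one:
  fixes D :: "'a::comm_ring_1 mat"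
  assumes "D \<in> carrier_mat n n"
  shows "char_poly (block_diag_mat (mat_diag 1 (\<lambda>_. e)) D) = [:-e, 1:] * char_poly D"
proof -
  have "char_poly (mat_diag 1 (\<lambda>_. e)) = [:-e, 1:]"
    by (simp add: mat_diag_def char_poly_defs det_def sign_def)
  then show ?thesis
    using char_poly_four_block_zeros_col[OF mat_diag_dim zero_carrier_mat assms] assms
    by (simp add: block_diag_mat_def)
qed

lemma symmetric_mat_with_eigen_col:
  assumes M: "M \<in> carrier_mat (Suc n) (Suc n)" "transpose_mat M = M"
    and col0: "\<And>i. i < Suc n \<Longrightarrow> M $$ (i,0) = (if i = 0 then e else 0)"
  obtains D where "D \<in> carrier_mat n n" "transpose_mat D = D"
    "M = block_diag_mat (mat_diag 1 (\<lambda>_. e)) D"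
proof
  define D where "D = mat n n (\<lambda>(i,j). M $$ (Suc i, Suc j))"
  show D: "D \<in> carrier_mat n n" by (simp add: D_def)
  have M_sym: "M $$ (j,i) = M $$ (i,j)" if "i < Suc n" "j < Suc n" for i j
    using M that by (metis carrier_matD index_transpose_mat(1))
  show "transpose_mat D = D" by (rule eq_matI) (auto simp: D_def M_sym)
  show "M = block_diag_mat (mat_diag 1 (\<lambda>_. e)) D"
  proof (rule eq_matI)
    fix i j assume "i < dim_row (block_diag_mat (mat_diag 1 (\<lambda>_. e)) D)"
      "j < dim_col (block_diag_mat (mat_diag 1 (\<lambda>_. e)) D)"
    then have ij: "i < Suc n" "j < Suc n" using D by (auto simp: block_diag_mat_def)
    show "M $$ (i,j) = block_diag_mat (mat_diag 1 (\<lambda>_. e)) D $$ (i,j)"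
      using ij D col0 M_sym[of 0 j] col0[of j]
      by (cases i; cases j) (auto simp: block_diag_mat_def mat_diag_def D_def)
  qed (use M D in \<open>auto simp: block_diag_mat_def\<close>)
qed

lemma orthonormal_conj_eigen_col:
  fixes A :: "real mat"
  assumes A: "A \<in> carrier_mat n n" and W: "orthonormal_mat n W"
    and Aw: "A *\<^sub>v col W 0 = e \<cdot>\<^sub>v col W 0" and i: "i < n"
  shows "(transpose_mat W * A * W) $$ (i,0) = (if i = 0 then e else 0)"
proof -
  have Wc: "W \<in> carrier_mat n n" using W by (rule orthonormal_mat_carrier)
  have "(transpose_mat W * A * W) $$ (i,0) = row (transpose_mat W) i \<bullet> col (A * W) 0"
    using A Wc i by (simp add: assoc_mult_mat[of _ n n A n W n] del: col_mult2)
  also have "row (transpose_mat W) i = col W i" using Wc i by simp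
  also have "col (A * W) 0 = A *\<^sub>v col W 0" using i by (intro col_mult2[OF A Wc]) simp
  also have "col W i \<bullet> (A *\<^sub>v col W 0) = e * (col W i \<bullet> col W 0)" using Aw Wc i by simp
  finally show ?thesis using orthonormal_mat_col_scalar_prod[OF W i, of 0] i by simp
qed

section \<open>The spectral theorem for real symmetric matrices\<close>

lemma symmetric_deflation:
  fixes A :: "real mat"
  assumes A: "A \<in> carrier_mat (Suc n) (Suc n)" and A_sym: "transpose_mat A = A"
    and "eigenvalue A e"
  obtains W D where "orthonormal_mat (Suc n) W" "D \<in> carrier_mat n n" "transpose_mat D = D"
    "transpose_mat W * A * W = block_diag_mat (mat_diag 1 (\<lambda>_. e)) D"
proof -
  obtain u where u: "u \<in> carrier_vec (Suc n)" "u \<bullet> u = 1" "A *\<^sub>v u = e \<cdot>\<^sub>v u"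
    by (rule unit_eigenvector_exists[OF A assms(3)])
  obtain W where W: "orthonormal_mat (Suc n) W" and W0: "col W 0 = u"
    using unit_vec_extends_to_orthonormal_mat[OF u(1,2)] by blast
  have Wc: "W \<in> carrier_mat (Suc n) (Suc n)" using W by (rule orthonormal_mat_carrier)
  define M where "M = transpose_mat W * A * W"
  have M: "M \<in> carrier_mat (Suc n) (Suc n)" using A Wc by (simp add: M_def)
  have M_sym: "transpose_mat M = M"
    using A A_sym Wc
    by (simp add: M_def transpose_mult[of _ "Suc n" "Suc n" _ "Suc n"]
      assoc_mult_mat[of _ "Suc n" "Suc n" _ "Suc n" _ "Suc n"])
  have "M $$ (i,0) = (if i = 0 then e else 0)" if "i < Suc n" for i
    using orthonormal_conj_eigen_col[OF A W _ that] u(3) W0 by (simp add: M_def)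
  then obtain D where "D \<in> carrier_mat n n" "transpose_mat D = D"
    "M = block_diag_mat (mat_diag 1 (\<lambda>_. e)) D"
    using symmetric_mat_with_eigen_col[OF M M_sym] by blast
  with W show ?thesis by (intro that) (simp_all add: M_def)
qed

lemma symmetric_orthonormal_diagonalisation:
  fixes A :: "real mat"
  assumes "A \<in> carrier_mat n n" "transpose_mat A = A" "char_poly A = (\<Prod>a\<leftarrow>es. [:- a, 1:])"
  shows "\<exists>U. orthonormal_mat n U \<and> A = spectral_mat n U (\<lambda>i. es ! i)"
  using assms
proof (induction es arbitrary: n A)
  case Nil
  then have "n = 0" using degree_monic_char_poly[of A n] by simp
  with Nil.prems(1) show ?case
    by (intro exI[of _ "1\<^sub>m 0"]) (auto simp: orthonormal_mat_def intro: eq_matI)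
next
  case (Cons e es)
  note A = Cons.prems(1) and A_sym = Cons.prems(2)
  have cp: "char_poly A = [:-e, 1:] * (\<Prod>a\<leftarrow>es. [:- a, 1:])" using Cons.prems(3) by simp
  have "degree (char_poly A) = Suc (length es)"
    using Cons.prems(3) degree_linear_factors[of uminus "e # es"] by simp
  then obtain n1 where n: "n = Suc n1" using degree_monic_char_poly[OF A] by simp
  have "eigenvalue A e" unfolding eigenvalue_root_char_poly[OF A] cp by simp
  then obtain W D where W: "orthonormal_mat n W" and D: "D \<in> carrier_mat n1 n1" "transpose_mat D = D"
    and WAW: "transpose_mat W * A * W = block_diag_mat (mat_diag 1 (\<lambda>_. e)) D"
    using symmetric_deflation[OF A[unfolded n] A_sym] unfolding n by blast
  have Wc: "W \<in> carrier_mat n n" using W by (rule orthonormal_mat_carrier)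
  have A_WDW: "A = W * block_diag_mat (mat_diag 1 (\<lambda>_. e)) D * transpose_mat W"
    using orthonormal_mat_conj_cancel[OF W A] by (simp add: WAW)
  have "[:-e, 1:] * char_poly D = [:-e, 1:] * (\<Prod>a\<leftarrow>es. [:- a, 1:])"
    using char_poly_orthonormal_conj[OF W A] char_poly_block_diag_mat_one[OF D(1)] cp
    by (simp add: WAW)
  then have "char_poly D = (\<Prod>a\<leftarrow>es. [:- a, 1:])" by (subst (asm) mult_left_cancel) auto
  from Cons.IH[OF D this] obtain V where V: "orthonormal_mat n1 V"
    and DV: "D = spectral_mat n1 V (\<lambda>i. es ! i)" by blast
  have Vc: "V \<in> carrier_mat n1 n1" using V by (rule orthonormal_mat_carrier)
  have "spectral_mat 1 (1\<^sub>m 1) (\<lambda>i. (e # es) ! i) = mat_diag 1 (\<lambda>_. e)"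
    by (rule eq_matI) (auto simp: spectral_mat_index mat_diag_def)
  then have "block_diag_mat (mat_diag 1 (\<lambda>_. e)) D
      = spectral_mat n (block_diag_mat (1\<^sub>m 1) V) (\<lambda>i. (e # es) ! i)"
    using spectral_mat_block_diag_mat[OF one_carrier_mat[of 1] Vc, where f = "\<lambda>i. (e # es) ! i"]
    by (simp add: n DV)
  then have "A = spectral_mat n (W * block_diag_mat (1\<^sub>m 1) V) (\<lambda>i. (e # es) ! i)"
    using A_WDW spectral_mat_mult_left[OF Wc] block_diag_mat_carrier[OF one_carrier_mat[of 1] Vc]
    by (simp add: n)
  moreover have "orthonormal_mat n (W * block_diag_mat (1\<^sub>m 1) V)"
    using orthonormal_mat_mult[OF W] orthonormal_block_diag_mat[of 1 "1\<^sub>m 1" n1 V] V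
    by (simp add: n orthonormal_mat_def)
  ultimately show ?case by blast
qed

lemma cnj_symmetric_form:
  fixes A :: "real mat" and v :: "complex vec"
  assumes A: "A \<in> carrier_mat n n" and A_sym: "transpose_mat A = A"
  defines "s \<equiv> (\<Sum>i<n. \<Sum>j<n. complex_of_real (A $$ (i,j)) * (cnj (v $ i) * v $ j))"
  shows "cnj s = s"
proof -
  have A_ij: "A $$ (i,j) = A $$ (j,i)" if "i < n" "j < n" for i j
    using A A_sym that by (metis carrier_matD index_transpose_mat(1))
  have "cnj s = (\<Sum>i<n. \<Sum>j<n. complex_of_real (A $$ (i,j)) * (v $ i * cnj (v $ j)))"
    unfolding s_def by (simp add: cnj_sum)
  also have "\<dots> = (\<Sum>j<n. \<Sum>i<n. complex_of_real (A $$ (i,j)) * (v $ i * cnj (v $ j)))"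
    by (rule sum.swap)
  also have "\<dots> = s"
    unfolding s_def by (intro sum.cong refl) (simp add: A_ij mult_ac)
  finally show ?thesis .
qed

lemma sum_cnj_mult_self_pos:
  fixes v :: "complex vec"
  assumes "v \<in> carrier_vec n" "v \<noteq> 0\<^sub>v n"
  shows "(\<Sum>i<n. cnj (v $ i) * v $ i) = complex_of_real (\<Sum>i<n. (cmod (v $ i))^2)"
    and "0 < (\<Sum>i<n. (cmod (v $ i))^2)"
proof -
  show "(\<Sum>i<n. cnj (v $ i) * v $ i) = complex_of_real (\<Sum>i<n. (cmod (v $ i))^2)"
    unfolding of_real_sum
  proof (intro sum.cong refl)
    fix i show "cnj (v $ i) * v $ i = complex_of_real ((cmod (v $ i))^2)"
      using complex_norm_square[of "v $ i"] by (simp add: mult.commute)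
  qed
  have "(\<Sum>i<n. (cmod (v $ i))^2) \<noteq> 0"
  proof
    assume "(\<Sum>i<n. (cmod (v $ i))^2) = 0"
    then have "\<forall>i\<in>{..<n}. (cmod (v $ i))^2 = 0" by (subst (asm) sum_nonneg_eq_0_iff) auto
    then have "v = 0\<^sub>v n" using assms(1) by (intro eq_vecI) auto
    with assms(2) show False by simp
  qed
  then show "0 < (\<Sum>i<n. (cmod (v $ i))^2)" by (simp add: less_le sum_nonneg)
qed

lemma eigenvalue_of_real_symmetric_is_real:
  fixes A :: "real mat"
  assumes A: "A \<in> carrier_mat n n" and A_sym: "transpose_mat A = A"
    and "eigenvalue (map_mat complex_of_real A) a"
  shows "a \<in> \<real>"
proof -
  obtain v where "eigenvector (map_mat complex_of_real A) v a"
    using assms(3) unfolding eigenvalue_def by auto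
  then have v: "v \<in> carrier_vec n" "v \<noteq> 0\<^sub>v n"
    and Av: "map_mat complex_of_real A *\<^sub>v v = a \<cdot>\<^sub>v v"
    using A unfolding eigenvector_def by auto
  define s where "s = (\<Sum>i<n. \<Sum>j<n. complex_of_real (A $$ (i,j)) * (cnj (v $ i) * v $ j))"
  define N where "N = (\<Sum>i<n. (cmod (v $ i))^2)"
  have Av_i: "(\<Sum>j<n. complex_of_real (A $$ (i,j)) * v $ j) = a * v $ i" if "i < n" for i
    using arg_cong[OF Av, of "\<lambda>w. w $ i"] A v that by (simp add: scalar_prod_def lessThan_atLeast0)
  have "s = (\<Sum>i<n. cnj (v $ i) * (\<Sum>j<n. complex_of_real (A $$ (i,j)) * v $ j))"
    unfolding s_def by (simp add: sum_distrib_left mult_ac)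
  also have "\<dots> = (\<Sum>i<n. cnj (v $ i) * (a * v $ i))" by (intro sum.cong refl) (simp add: Av_i)
  also have "\<dots> = a * (\<Sum>i<n. cnj (v $ i) * v $ i)" by (simp add: sum_distrib_left mult_ac)
  finally have "s = a * complex_of_real N" using sum_cnj_mult_self_pos(1)[OF v] by (simp add: N_def)
  then have "cnj a * complex_of_real N = a * complex_of_real N"
    using cnj_symmetric_form[OF A A_sym, of v] by (metis complex_cnj_complex_of_real complex_cnj_mult s_def)
  moreover have "N \<noteq> 0" using sum_cnj_mult_self_pos(2)[OF v] by (simp add: N_def)
  ultimately have "cnj a = a" by simp
  then show ?thesis by (simp add: Reals_cnj_iff)
qed

lemma char_poly_real_symmetric_splits:
  fixes A :: "real mat"
  assumes A: "A \<in> carrier_mat n n" and A_sym: "transpose_mat A = A"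
  obtains rs where "char_poly A = (\<Prod>a\<leftarrow>rs. [:- a, 1:])"
proof -
  let ?A = "map_mat complex_of_real A"
  have A': "?A \<in> carrier_mat n n" using A by simp
  obtain as where cas: "char_poly ?A = (\<Prod>a\<leftarrow>as. [:- a, 1:])"
    using char_poly_factorized[OF A'] by auto
  have "a \<in> \<real>" if "a \<in> set as" for a
  proof -
    have "poly (char_poly ?A) a = 0" unfolding cas using that
      by (auto simp: poly_prod_list prod_list_zero_iff)
    then show ?thesis
      using eigenvalue_root_char_poly[OF A'] eigenvalue_of_real_symmetric_is_real[OF A A_sym] by simp
  qed
  then have as_real: "as = map complex_of_real (map Re as)"
    by (intro nth_equalityI) (auto simp: complex_is_Real_iff complex_eq_iff)
  interpret R: map_poly_inj_comm_ring_hom complex_of_real ..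
  have "map_poly complex_of_real (char_poly A) = char_poly ?A"
    by (rule of_real_hom.char_poly_hom[OF A, symmetric])
  also have "\<dots> = map_poly complex_of_real (\<Prod>a\<leftarrow>map Re as. [:- a, 1:])"
    by (subst cas, subst as_real) (simp add: R.hom_prod_list o_def)
  finally have "char_poly A = (\<Prod>a\<leftarrow>map Re as. [:- a, 1:])" by (rule R.injectivity)
  then show ?thesis by (rule that)
qed

lemma real_symmetric_spectral_theorem:
  fixes A :: "real mat"
  assumes A: "A \<in> carrier_mat n n" and A_sym: "transpose_mat A = A"
  shows "sorted_wrt (\<ge>) (eigs_desc A)" "length (eigs_desc A) = n"
    and "\<exists>U. orthonormal_mat n U \<and> A = spectral_mat n U (eig A)"
proof -
  obtain rs where "char_poly A = (\<Prod>a\<leftarrow>rs. [:- a, 1:])"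
    by (rule char_poly_real_symmetric_splits[OF A A_sym])
  note eigs = eigs_desc_char_poly[OF this]
  show "sorted_wrt (\<ge>) (eigs_desc A)" by (rule eigs(1))
  show "length (eigs_desc A) = n"
    using degree_monic_char_poly[OF A] degree_linear_factors[of uminus "eigs_desc A"] eigs(2) by simp
  show "\<exists>U. orthonormal_mat n U \<and> A = spectral_mat n U (eig A)"
    using symmetric_orthonormal_diagonalisation[OF A A_sym eigs(2)] by (simp add: eig_def[abs_def])
qed

section \<open>Eigenvalue inequalities\<close>

lemma eig_antitone:
  assumes "A \<in> carrier_mat n n" "transpose_mat A = A" "i \<le> j" "j < n"
  shows "eig A j \<le> eig A i"
  using real_symmetric_spectral_theorem(1,2)[OF assms(1,2)] assms(3,4)
  unfolding eig_def by (cases "i = j") (auto simp: sorted_wrt_iff_nth_less)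

lemma eig_spectral_mat:
  assumes U: "orthonormal_mat n U" and \<mu>: "\<And>i j. i \<le> j \<Longrightarrow> j < n \<Longrightarrow> \<mu> j \<le> \<mu> i"
    and i: "i < n"
  shows "eig (spectral_mat n U \<mu>) i = \<mu> i"
proof -
  have Uc: "U \<in> carrier_mat n n" using U by (rule orthonormal_mat_carrier)
  have "similar_mat (spectral_mat n U \<mu>) (mat_diag n \<mu>)"
    unfolding similar_mat_def similar_mat_wit_def
    using Uc orthonormal_mat_right_inverse[OF U] U
    by (intro exI[of _ U] exI[of _ "transpose_mat U"])
      (auto simp: orthonormal_mat_def spectral_mat_def Let_def)
  then have "char_poly (spectral_mat n U \<mu>) = char_poly (mat_diag n \<mu>)"
    by (rule char_poly_similar)
  also have "\<dots> = (\<Prod>a\<leftarrow>diag_mat (mat_diag n \<mu>). [:- a, 1:])"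
    by (rule char_poly_upper_triangular[OF mat_diag_dim]) (auto simp: upper_triangular_def mat_diag_def)
  also have "diag_mat (mat_diag n \<mu>) = map \<mu> [0..<n]"
    by (rule nth_equalityI) (auto simp: diag_mat_def mat_diag_def)
  finally have "eigs_desc (spectral_mat n U \<mu>) = map \<mu> [0..<n]"
    by (intro eigs_desc_eqI) (auto simp: sorted_wrt_iff_nth_less intro: \<mu>)
  then show ?thesis using i by (simp add: eig_def)
qed

lemma sum_eig_eq_mat_trace:
  assumes A: "A \<in> carrier_mat n n" and A_sym: "transpose_mat A = A"
  shows "(\<Sum>i<n. eig A i) = mat_trace A"
proof -
  obtain U where U: "orthonormal_mat n U" and AU: "A = spectral_mat n U (eig A)"
    using real_symmetric_spectral_theorem(3)[OF A A_sym] by blast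
  show ?thesis by (subst AU) (rule mat_trace_spectral_mat[OF U, symmetric])
qed

lemma sum_eig_add:
  assumes A: "A \<in> carrier_mat n n" "transpose_mat A = A"
    and B: "B \<in> carrier_mat n n" "transpose_mat B = B"
  shows "(\<Sum>i<n. eig (A + B) i) = (\<Sum>i<n. eig A i) + (\<Sum>i<n. eig B i)"
proof -
  have AB: "A + B \<in> carrier_mat n n" "transpose_mat (A + B) = A + B"
    using A B by (simp_all add: transpose_add)
  have "(\<Sum>i<n. eig (A + B) i) = mat_trace (A + B)" by (rule sum_eig_eq_mat_trace[OF AB])
  also have "\<dots> = mat_trace A + mat_trace B" by (rule mat_trace_add[OF A(1) B(1)])
  finally show ?thesis using sum_eig_eq_mat_trace[OF A] sum_eig_eq_mat_trace[OF B] by simp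
qed

lemma eig_add_scalar:
  assumes A: "A \<in> carrier_mat n n" and A_sym: "transpose_mat A = A" and i: "i < n"
  shows "eig (A + c \<cdot>\<^sub>m 1\<^sub>m n) i = eig A i + c"
proof -
  obtain U where U: "orthonormal_mat n U" and AU: "A = spectral_mat n U (eig A)"
    using real_symmetric_spectral_theorem(3)[OF A A_sym] by blast
  have "A + c \<cdot>\<^sub>m 1\<^sub>m n = spectral_mat n U (eig A) + spectral_mat n U (\<lambda>k. c)"
    using AU spectral_mat_const[OF U] by simp
  also have "\<dots> = spectral_mat n U (\<lambda>k. eig A k + c)"
    by (rule spectral_mat_add[OF orthonormal_mat_carrier[OF U]])
  also have "eig \<dots> i = eig A i + c"
    using eig_antitone[OF A A_sym] by (intro eig_spectral_mat[OF U _ i]) simp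
  finally show ?thesis .
qed

lemma exists_nonzero_vec_orthogonal_to_all_but_one:
  fixes c :: "nat \<Rightarrow> 'a::idom vec"
  assumes k: "k < n" and c: "\<And>r. r < n \<Longrightarrow> c r \<in> carrier_vec n"
  obtains z where "z \<in> carrier_vec n" "z \<noteq> 0\<^sub>v n" "\<And>r. r < n \<Longrightarrow> r \<noteq> k \<Longrightarrow> c r \<bullet> z = 0"
proof -
  define M where "M = mat\<^sub>r n n (\<lambda>r. if r = k then 0\<^sub>v n else c r)"
  have "det M = 0" unfolding M_def by (rule det_row_0[OF k]) (use c in auto)
  then obtain z where z: "z \<in> carrier_vec n" "z \<noteq> 0\<^sub>v n" and Mz: "M *\<^sub>v z = 0\<^sub>v n"
    using det_0_iff_vec_prod_zero[of M n] by (auto simp: M_def)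
  have "c r \<bullet> z = 0" if "r < n" "r \<noteq> k" for r
    using arg_cong[OF Mz, of "\<lambda>v. v $ r"] that c by (simp add: M_def)
  with z show ?thesis by (rule that)
qed

lemma quadratic_form_spectral_mat_ge:
  assumes U: "orthonormal_mat n U" and \<mu>: "\<And>i j. i \<le> j \<Longrightarrow> j < n \<Longrightarrow> \<mu> j \<le> \<mu> i"
    and j: "j < n" and z: "z \<in> carrier_vec n"
    and zU: "\<And>k. j < k \<Longrightarrow> k < n \<Longrightarrow> col U k \<bullet> z = 0"
  shows "\<mu> j * (z \<bullet> z) \<le> z \<bullet> (spectral_mat n U \<mu> *\<^sub>v z)"
proof -
  have "\<mu> j * (z \<bullet> z) = (\<Sum>k<n. \<mu> j * (col U k \<bullet> z)^2)"
    by (simp add: sum_distrib_left[symmetric] sum_sq_col_scalar_prod[OF U z])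
  also have "\<dots> \<le> (\<Sum>k<n. \<mu> k * (col U k \<bullet> z)^2)"
  proof (rule sum_mono)
    fix k assume "k \<in> {..<n}"
    then show "\<mu> j * (col U k \<bullet> z)^2 \<le> \<mu> k * (col U k \<bullet> z)^2"
      using \<mu>[of k j] j zU[of k] by (cases "k \<le> j") (auto intro: mult_right_mono)
  qed
  also have "\<dots> = z \<bullet> (spectral_mat n U \<mu> *\<^sub>v z)"
    by (rule quadratic_form_spectral_mat[OF orthonormal_mat_carrier[OF U] z, symmetric])
  finally show ?thesis .
qed

lemma quadratic_form_spectral_mat_le:
  assumes U: "orthonormal_mat n U" and \<mu>: "\<And>i j. i \<le> j \<Longrightarrow> j < n \<Longrightarrow> \<mu> j \<le> \<mu> i"
    and z: "z \<in> carrier_vec n" and zU: "\<And>k. k < j \<Longrightarrow> col U k \<bullet> z = 0"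
  shows "z \<bullet> (spectral_mat n U \<mu> *\<^sub>v z) \<le> \<mu> j * (z \<bullet> z)"
proof -
  have "z \<bullet> (spectral_mat n U \<mu> *\<^sub>v z) = (\<Sum>k<n. \<mu> k * (col U k \<bullet> z)^2)"
    by (rule quadratic_form_spectral_mat[OF orthonormal_mat_carrier[OF U] z])
  also have "\<dots> \<le> (\<Sum>k<n. \<mu> j * (col U k \<bullet> z)^2)"
  proof (rule sum_mono)
    fix k assume "k \<in> {..<n}"
    then show "\<mu> k * (col U k \<bullet> z)^2 \<le> \<mu> j * (col U k \<bullet> z)^2"
      using \<mu>[of j k] zU[of k] by (cases "j \<le> k") (auto intro: mult_right_mono)
  qed
  also have "\<dots> = \<mu> j * (z \<bullet> z)"
    by (simp add: sum_distrib_left[symmetric] sum_sq_col_scalar_prod[OF U z])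
  finally show ?thesis .
qed

lemma eig_le_eig_add_psd:
  assumes X: "X \<in> carrier_mat n n" "transpose_mat X = X" and V: "orthonormal_mat n V"
    and g: "\<And>k. k < n \<Longrightarrow> 0 \<le> g k" and j: "j < n"
  shows "eig X j \<le> eig (X + spectral_mat n V g) j"
proof -
  define Y where "Y = X + spectral_mat n V g"
  have Vc: "V \<in> carrier_mat n n" using V by (rule orthonormal_mat_carrier)
  have Y: "Y \<in> carrier_mat n n" "transpose_mat Y = Y"
    using X Vc by (simp_all add: Y_def transpose_add spectral_mat_symmetric)
  obtain U where U: "orthonormal_mat n U" and XU: "X = spectral_mat n U (eig X)"
    using real_symmetric_spectral_theorem(3)[OF X] by blast
  obtain W where W: "orthonormal_mat n W" and YW: "Y = spectral_mat n W (eig Y)"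
    using real_symmetric_spectral_theorem(3)[OF Y] by blast
  \<comment> \<open>Courant--Fischer: \<open>z\<close> lies in the span of the eigenvectors of \<open>X\<close> with index \<open>\<le> j\<close>
    and in that of the eigenvectors of \<open>Y\<close> with index \<open>\<ge> j\<close>.\<close>
  define c where "c r = (if r < j then col W r else col U r)" for r
  have "c r \<in> carrier_vec n" if "r < n" for r
    using that orthonormal_mat_carrier[OF U] orthonormal_mat_carrier[OF W] by (simp add: c_def)
  then obtain z where z: "z \<in> carrier_vec n" "z \<noteq> 0\<^sub>v n"
    and zWU: "\<And>r. r < n \<Longrightarrow> r \<noteq> j \<Longrightarrow> c r \<bullet> z = 0"
    using exists_nonzero_vec_orthogonal_to_all_but_one[where c = c, OF j] by blast
  have zU: "col U k \<bullet> z = 0" if "j < k" "k < n" for k using zWU[of k] that by (simp add: c_def)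
  have zW: "col W k \<bullet> z = 0" if "k < j" for k using zWU[of k] that j by (simp add: c_def)
  have "eig X j * (z \<bullet> z) \<le> z \<bullet> (spectral_mat n U (eig X) *\<^sub>v z)"
    by (rule quadratic_form_spectral_mat_ge[OF U eig_antitone[OF X] j z(1) zU])
  also have "\<dots> = z \<bullet> (X *\<^sub>v z)" by (simp only: XU[symmetric])
  also have "\<dots> \<le> z \<bullet> (X *\<^sub>v z) + z \<bullet> (spectral_mat n V g *\<^sub>v z)"
    using quadratic_form_spectral_mat[OF Vc z(1), of g] g by (auto intro!: sum_nonneg)
  also have "\<dots> = z \<bullet> (Y *\<^sub>v z)"
    unfolding Y_def add_mult_distrib_mat_vec[OF X(1) spectral_mat_carrier[OF Vc] z(1)]
    by (rule scalar_prod_add_distrib[OF z(1) mult_mat_vec_carrier[OF X(1) z(1)]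
        mult_mat_vec_carrier[OF spectral_mat_carrier[OF Vc] z(1)], symmetric])
  also have "\<dots> = z \<bullet> (spectral_mat n W (eig Y) *\<^sub>v z)" by (simp only: YW[symmetric])
  also have "\<dots> \<le> eig Y j * (z \<bullet> z)"
    by (rule quadratic_form_spectral_mat_le[OF W eig_antitone[OF Y] z(1) zW])
  finally have "eig X j * (z \<bullet> z) \<le> eig Y j * (z \<bullet> z)" .
  then show ?thesis using real_scalar_prod_self_pos[OF z] by (simp add: Y_def)
qed

lemma eig_add_spectral_mat_mono:
  assumes A: "A \<in> carrier_mat n n" "transpose_mat A = A" and V: "orthonormal_mat n V"
    and fg: "\<And>k. k < n \<Longrightarrow> f k \<le> g k" and t: "t < n"
  shows "eig (A + spectral_mat n V f) t \<le> eig (A + spectral_mat n V g) t"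
proof -
  have Vc: "V \<in> carrier_mat n n" using V by (rule orthonormal_mat_carrier)
  have "A + spectral_mat n V g = (A + spectral_mat n V f) + spectral_mat n V (\<lambda>k. g k - f k)"
    using A Vc by (simp add: assoc_add_mat[of A n n] spectral_mat_add)
  moreover have "transpose_mat (A + spectral_mat n V f) = A + spectral_mat n V f"
    using A Vc by (simp add: transpose_add spectral_mat_symmetric)
  ultimately show ?thesis
    using eig_le_eig_add_psd[of "A + spectral_mat n V f" n V "\<lambda>k. g k - f k" t] A Vc V fg t
    by simp
qed

lemma sum_max_antitone:
  fixes \<beta> :: "nat \<Rightarrow> real"
  assumes \<beta>: "\<And>i j. i \<le> j \<Longrightarrow> j < n \<Longrightarrow> \<beta> j \<le> \<beta> i" and k: "0 < k" "k \<le> n"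
  shows "(\<Sum>t<n. max (\<beta> t) (\<beta> (k - 1))) = (\<Sum>t<k. \<beta> t) + real (n - k) * \<beta> (k - 1)"
proof -
  have "(\<Sum>t<n. max (\<beta> t) (\<beta> (k - 1)))
      = (\<Sum>t\<in>{0..<k}. max (\<beta> t) (\<beta> (k - 1))) + (\<Sum>t\<in>{k..<n}. max (\<beta> t) (\<beta> (k - 1)))"
    using sum.atLeastLessThan_concat[of 0 k n "\<lambda>t. max (\<beta> t) (\<beta> (k - 1))"] k
    by (simp add: lessThan_atLeast0)
  also have "(\<Sum>t\<in>{0..<k}. max (\<beta> t) (\<beta> (k - 1))) = (\<Sum>t<k. \<beta> t)"
    unfolding lessThan_atLeast0[symmetric]
  proof (rule sum.cong[OF refl])
    fix t assume "t \<in> {..<k}"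
    then show "max (\<beta> t) (\<beta> (k - 1)) = \<beta> t" using \<beta>[of t "k - 1"] k by auto
  qed
  also have "(\<Sum>t\<in>{k..<n}. max (\<beta> t) (\<beta> (k - 1))) = (\<Sum>t\<in>{k..<n}. \<beta> (k - 1))"
  proof (rule sum.cong[OF refl])
    fix t assume "t \<in> {k..<n}"
    then show "max (\<beta> t) (\<beta> (k - 1)) = \<beta> (k - 1)" using \<beta>[of "k - 1" t] k by auto
  qed
  finally show ?thesis by simp
qed

lemma lidskii_partial_sum:
  assumes A: "A \<in> carrier_mat n n" "transpose_mat A = A"
    and B: "B \<in> carrier_mat n n" "transpose_mat B = B"
    and S: "S \<subseteq> {..<n}" and k: "card S = k"
  shows "(\<Sum>t\<in>S. eig (A + B) t - eig A t) \<le> (\<Sum>t<k. eig B t)"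
proof (cases "k = 0")
  case True
  then show ?thesis using S k finite_subset[OF S] by simp
next
  case False
  have fin: "finite S" using S finite_subset by blast
  have kn: "k \<le> n" using card_mono[OF _ S] k by simp
  obtain V where V: "orthonormal_mat n V" and BV: "B = spectral_mat n V (eig B)"
    using real_symmetric_spectral_theorem(3)[OF B] by blast
  have Vc: "V \<in> carrier_mat n n" using V by (rule orthonormal_mat_carrier)
  \<comment> \<open>\<open>B'\<close> dominates both \<open>B\<close> and \<open>s I\<close>, and its trace exceeds the sum of the \<open>k\<close> largest
    eigenvalues of \<open>B\<close> by exactly \<open>(n - k) s\<close>.\<close>
  define s where "s = eig B (k - 1)"
  define B' where "B' = spectral_mat n V (\<lambda>i. max (eig B i) s)"
  have B': "B' \<in> carrier_mat n n" "transpose_mat B' = B'"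
    using Vc by (simp_all add: B'_def spectral_mat_symmetric)
  have upper: "eig (A + B) t \<le> eig (A + B') t" if "t < n" for t
    using eig_add_spectral_mat_mono[OF A V _ that, of "eig B" "\<lambda>i. max (eig B i) s"]
    by (simp add: B'_def BV[symmetric])
  have lower: "eig A t + s \<le> eig (A + B') t" if "t < n" for t
    using eig_add_spectral_mat_mono[OF A V _ that, of "\<lambda>_. s" "\<lambda>i. max (eig B i) s"]
      eig_add_scalar[OF A that] spectral_mat_const[OF V]
    by (simp add: B'_def)
  define d where "d t = eig (A + B') t - eig A t" for t
  have "(\<Sum>t<n. d t) = (\<Sum>t<n. max (eig B t) s)"
    using sum_eig_add[OF A B'] sum_eig_eq_mat_trace[OF B'] mat_trace_spectral_mat[OF V]
    by (simp add: d_def sum_subtractf B'_def)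
  also have "\<dots> = (\<Sum>t<k. eig B t) + real (n - k) * s"
    unfolding s_def using False kn eig_antitone[OF B] by (intro sum_max_antitone) auto
  finally have total: "(\<Sum>t<n. d t) = (\<Sum>t<k. eig B t) + real (n - k) * s" .
  have "real (n - k) * s = (\<Sum>t\<in>{..<n} - S. s)"
    using card_Diff_subset[OF fin S] k by simp
  also have "\<dots> \<le> (\<Sum>t\<in>{..<n} - S. d t)"
  proof (rule sum_mono)
    fix t assume "t \<in> {..<n} - S"
    then show "s \<le> d t" using lower[of t] by (simp add: d_def)
  qed
  finally have rest: "real (n - k) * s \<le> (\<Sum>t\<in>{..<n} - S. d t)" .
  have "(\<Sum>t\<in>S. eig (A + B) t - eig A t) \<le> (\<Sum>t\<in>S. d t)"
    using upper S by (intro sum_mono) (auto simp: d_def)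
  also have "\<dots> = (\<Sum>t<n. d t) - (\<Sum>t\<in>{..<n} - S. d t)"
    using sum.subset_diff[OF S, of d] by simp
  finally show ?thesis using total rest by linarith
qed

lemma summation_by_parts_lower_bound:
  fixes c z :: "nat \<Rightarrow> real"
  assumes "\<And>i j. i \<le> j \<Longrightarrow> j \<le> m \<Longrightarrow> c j \<le> c i"
    and "\<And>k. k \<le> m \<Longrightarrow> 0 \<le> (\<Sum>i<Suc k. z i)"
  shows "c m * (\<Sum>i<Suc m. z i) \<le> (\<Sum>i<Suc m. c i * z i)"
  using assms
proof (induction m)
  case (Suc m)
  have "c m * (\<Sum>i<Suc m. z i) \<le> (\<Sum>i<Suc m. c i * z i)"
    using Suc.prems by (intro Suc.IH) auto
  moreover have "c (Suc m) * (\<Sum>i<Suc m. z i) \<le> c m * (\<Sum>i<Suc m. z i)"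
    using Suc.prems(1)[of m "Suc m"] Suc.prems(2)[of m] by (intro mult_right_mono) auto
  ultimately show ?case by (simp add: distrib_left)
qed simp

lemma weighted_sum_mono_majorized:
  fixes c x y :: "nat \<Rightarrow> real"
  assumes c: "\<And>i j. i \<le> j \<Longrightarrow> j < m \<Longrightarrow> c j \<le> c i"
    and partial: "\<And>k. k < m \<Longrightarrow> (\<Sum>i<Suc k. x i) \<le> (\<Sum>i<Suc k. y i)"
    and total: "(\<Sum>i<m. x i) = (\<Sum>i<m. y i)"
  shows "(\<Sum>i<m. c i * x i) \<le> (\<Sum>i<m. c i * y i)"
proof (cases m)
  case (Suc m')
  have "c m' * (\<Sum>i<Suc m'. y i - x i) \<le> (\<Sum>i<Suc m'. c i * (y i - x i))"
    using c partial Suc by (intro summation_by_parts_lower_bound) (auto simp: sum_subtractf)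
  then show ?thesis
    using total Suc by (simp add: sum_subtractf right_diff_distrib)
qed simp

theorem lemma6p1:
  fixes A B :: "real mat" and c :: "nat \<Rightarrow> real" and \<sigma> :: "nat \<Rightarrow> nat" and m :: nat
  assumes "A \<in> carrier_mat m m" and "B \<in> carrier_mat m m"
    and "transpose_mat A = A" and "transpose_mat B = B"
    and "\<And>i j. i \<le> j \<Longrightarrow> j < m \<Longrightarrow> c j \<le> c i"
    and "\<sigma> permutes {..<m}"
  shows "(\<Sum>j<m. c (\<sigma> j) * eig (A + B) j)
           \<le> (\<Sum>j<m. c (\<sigma> j) * eig A j) + (\<Sum>j<m. c j * eig B j)"
proof -
  note A = assms(1,3) and B = assms(2,4)
  define \<rho> where "\<rho> = inv_into UNIV \<sigma>"
  have \<rho>: "\<rho> permutes {..<m}" unfolding \<rho>_def by (rule permutes_inv[OF assms(6)])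
  have \<sigma>\<rho>: "\<sigma> (\<rho> i) = i" for i unfolding \<rho>_def by (rule permutes_inverses(1)[OF assms(6)])
  define x where "x i = eig (A + B) (\<rho> i) - eig A (\<rho> i)" for i
  have partial: "(\<Sum>i<Suc k. x i) \<le> (\<Sum>i<Suc k. eig B i)" if "k < m" for k
  proof -
    have "inj_on \<rho> {..<Suc k}" "\<rho> ` {..<Suc k} \<subseteq> {..<m}"
      using permutes_inj_on[OF \<rho>] permutes_image[OF \<rho>] that by auto
    then show ?thesis
      using lidskii_partial_sum[OF A B, of "\<rho> ` {..<Suc k}"] by (simp add: x_def sum.reindex card_image)
  qed
  have total: "(\<Sum>i<m. x i) = (\<Sum>i<m. eig B i)"
    using sum.permute[OF \<rho>, of "\<lambda>t. eig (A + B) t - eig A t"] sum_eig_add[OF A B]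
    by (simp add: x_def sum_subtractf comp_def)
  have "(\<Sum>i<m. c i * x i) \<le> (\<Sum>i<m. c i * eig B i)"
    using weighted_sum_mono_majorized[OF assms(5) partial total] .
  moreover have "(\<Sum>j<m. c (\<sigma> j) * (eig (A + B) j - eig A j)) = (\<Sum>i<m. c i * x i)"
    using sum.permute[OF \<rho>, of "\<lambda>j. c (\<sigma> j) * (eig (A + B) j - eig A j)"]
    by (simp add: x_def \<sigma>\<rho> comp_def)
  ultimately show ?thesis by (simp add: right_diff_distrib sum_subtractf)
qed

end
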